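(* Let $t$ be a well-behaved behavior. Then the set $\partial_{\simeq} t$ of dissimilar descendants of $t$ is finite; equivalently, the set of descendants of $t$ contains only finitely many $\simeq$-equivalence classes.
   Context: Let $\Sigma$ be a finite alphabet. Behaviors are the terms generated by $r,s ::= \phi \mid \varepsilon \mid x\ (x\in\Sigma) \mid r+s \mid r\cdot s \mid r^* \mid \mathrm{fork}(r)$. For words $v,w\in\Sigma^*$ the shuffle $v\| w\subseteq \Sigma^*$ is defined by $\varepsilon\|w=\{w\}$, $v\|\varepsilon=\{v\}$, $xv\|yw=\{x\}\cdot(v\|yw)\cup\{y\}\cdot(xv\|w)$ for $x,y\in\Sigma$, and it is lifted to languages by $L\|M=\bigcup_{v\in L,w\in M} v\|w$; $L\cdot M$ denotes concatenation of languages. For $K\subseteq\Sigma^*$ the trace language $L(r,K)\subseteq\Sigma^*$ is defined by structural recursion: $L(\phi,K)=\emptyset$, $L(\varepsilon,K)=K$, $L(x,K)=\{x\}\cdot K$, $L(r+s,K)=L(r,K)\cup L(s,K)$, $L(r\cdot s,K)=L(r,L(s,K))$, $L(r^*,K)$ is the least fixpoint (w.r.t. $\subseteq$) of the monotone map $X\mapsto L(r,X)\cup K$, and $L(\mathrm{fork}(r),K)=L(r)\|K$, where $L(r)=L(r,\{\varepsilon\})$. Semantic containment: $r\sqsubseteq s$ iff $L(r,K)\subseteq L(s,K)$ for all $K\subseteq\Sigma^*$. The concurrent part $\mathcal C(r)$ is the behavior defined by: $\mathcal C(\phi)=\phi$, $\mathcal C(\varepsilon)=\varepsilon$, $\mathcal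 C(x)=\phi$, $\mathcal C(r+s)=\mathcal C(r)+\mathcal C(s)$, $\mathcal C(r\cdot s)=\mathcal C(r)\cdot\mathcal C(s)$, $\mathcal C(r^* )=\mathcal C(r)^*$, $\mathcal C(\mathrm{fork}(r))=\mathrm{fork}(r)$. The derivative $\partial_x r$ of a behavior $r$ by $x\in\Sigma$ is the behavior defined by: $\partial_x\phi=\phi$, $\partial_x\varepsilon=\phi$, $\partial_x y=\varepsilon$ if $y=x$ and $\phi$ otherwise, $\partial_x(r+s)=\partial_x r+\partial_x s$, $\partial_x(r\cdot s)=\partial_x r\cdot s+\mathcal C(r)\cdot\partial_x s$, $\partial_x(r^* )=\partial_x r\cdot r^*$, $\partial_x(\mathrm{fork}(r))=\mathrm{fork}(\partial_x r)$; it is extended to words by $\partial_\varepsilon r=r$ and $\partial_{xw}r=\partial_w(\partial_x r)$. A descendant of $r$ is any behavior $\partial_w r$ with $w\in\Sigma^*$; $\partial r$ denotes the set of descendants of $r$. Similarity $\simeq$ is the smallest relation on behaviors that is reflexive, symmetric, transitive, closed under contexts (if $s\simeq t$ then $E[s]\simeq E[t]$ for every context $E ::= [\,] \mid E^* \mid E\cdot s \mid r\cdot E \mid E+s \mid r+E \mid \mathrm{fork}(E)$, where $E[t]$ replaces the hole by $t$), and contains the axioms $r+(s+t)\simeq(r+s)+t$, $r+s\simeq s+r$, $r+r\simeq r$, $r+\phi\simeq r$, $\phi+r\simeq r$, $\varepsilon\cdot r\simeq r$, $r\cdot\varepsilon\simeq r$, $\varepsilon^*\simeq\varepsilon$, $\mathrm{fork}(\varepsilon)\simeq\varepsilon$,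 $\phi\cdot r\simeq\phi$, $r\cdot\phi\simeq\phi$, $\phi^*\simeq\varepsilon$, $\mathrm{fork}(\phi)\simeq\phi$. The set of dissimilar descendants $\partial_{\simeq} r$ is a set containing exactly one (arbitrarily chosen) representative of each $\simeq$-equivalence class of elements of $\partial r$. A behavior $t$ is well-behaved if every subterm of $t$ of the form $r^*$ satisfies $\mathcal C(\partial_w r)\sqsubseteq\varepsilon$ for all $w\in\Sigma^*$. *)

theory Defs
  imports Main
begin

datatype 'a beh =
    Phi
  | Eps
  | Sym 'a
  | Plus "'a beh" "'a beh"
  | Seq "'a beh" "'a beh"
  | Star "'a beh"
  | Fork "'a beh"

definition shuffle_lang :: "'a list set \<Rightarrow> 'a list set \<Rightarrow> 'a list set" where
  "shuffle_lang L M = (\<Union>v\<in>L. \<Union>w\<in>M. shuffles v w)"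

primrec Lang :: "'a beh \<Rightarrow> 'a list set \<Rightarrow> 'a list set" where
  "Lang Phi K = {}"
| "Lang Eps K = K"
| "Lang (Sym x) K = (\<lambda>w. x # w) ` K"
| "Lang (Plus r s) K = Lang r K \<union> Lang s K"
| "Lang (Seq r s) K = Lang r (Lang s K)"
| "Lang (Star r) K = lfp (\<lambda>X. Lang r X \<union> K)"
| "Lang (Fork r) K = shuffle_lang (Lang r {[]}) K"

definition contained :: "'a beh \<Rightarrow> 'a beh \<Rightarrow> bool" where
  "contained r s \<longleftrightarrow> (\<forall>K. Lang r K \<subseteq> Lang s K)"

primrec Conc :: "'a beh \<Rightarrow> 'a beh" where
  "Conc Phi = Phi"
| "Conc Eps = Eps"
| "Conc (Sym x) = Phi"
| "Conc (Plus r s) = Plus (Conc r) (Conc s)"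
| "Conc (Seq r s) = Seq (Conc r) (Conc s)"
| "Conc (Star r) = Star (Conc r)"
| "Conc (Fork r) = Fork r"

primrec deriv :: "'a \<Rightarrow> 'a beh \<Rightarrow> 'a beh" where
  "deriv x Phi = Phi"
| "deriv x Eps = Phi"
| "deriv x (Sym y) = (if y = x then Eps else Phi)"
| "deriv x (Plus r s) = Plus (deriv x r) (deriv x s)"
| "deriv x (Seq r s) = Plus (Seq (deriv x r) s) (Seq (Conc r) (deriv x s))"
| "deriv x (Star r) = Seq (deriv x r) (Star r)"
| "deriv x (Fork r) = Fork (deriv x r)"

primrec derivw :: "'a list \<Rightarrow> 'a beh \<Rightarrow> 'a beh" where
  "derivw [] r = r"
| "derivw (x # w) r = derivw w (deriv x r)"

definition descendants :: "'a beh \<Rightarrow> 'a beh set" where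
  "descendants r = {derivw w r | w. True}"

datatype 'a ctx =
    Hole
  | CStar "'a ctx"
  | CSeqL "'a ctx" "'a beh"
  | CSeqR "'a beh" "'a ctx"
  | CPlusL "'a ctx" "'a beh"
  | CPlusR "'a beh" "'a ctx"
  | CFork "'a ctx"

primrec fill :: "'a ctx \<Rightarrow> 'a beh \<Rightarrow> 'a beh" where
  "fill Hole t = t"
| "fill (CStar E) t = Star (fill E t)"
| "fill (CSeqL E s) t = Seq (fill E t) s"
| "fill (CSeqR r E) t = Seq r (fill E t)"
| "fill (CPlusL E s) t = Plus (fill E t) s"
| "fill (CPlusR r E) t = Plus r (fill E t)"
| "fill (CFork E) t = Fork (fill E t)"

inductive sim :: "'a beh \<Rightarrow> 'a beh \<Rightarrow> bool" where
  sim_refl: "sim r r"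
| sim_sym: "sim r s \<Longrightarrow> sim s r"
| sim_trans: "sim r s \<Longrightarrow> sim s t \<Longrightarrow> sim r t"
| sim_ctx: "sim s t \<Longrightarrow> sim (fill E s) (fill E t)"
| ax_assoc: "sim (Plus r (Plus s t)) (Plus (Plus r s) t)"
| ax_comm: "sim (Plus r s) (Plus s r)"
| ax_idem: "sim (Plus r r) r"
| ax_plus_phi_r: "sim (Plus r Phi) r"
| ax_plus_phi_l: "sim (Plus Phi r) r"
| ax_seq_eps_l: "sim (Seq Eps r) r"
| ax_seq_eps_r: "sim (Seq r Eps) r"
| ax_star_eps: "sim (Star Eps) Eps"
| ax_fork_eps: "sim (Fork Eps) Eps"
| ax_seq_phi_l: "sim (Seq Phi r) Phi"
| ax_seq_phi_r: "sim (Seq r Phi) Phi"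
| ax_star_phi: "sim (Star Phi) Eps"
| ax_fork_phi: "sim (Fork Phi) Phi"

definition sim_rel :: "('a beh \<times> 'a beh) set" where
  "sim_rel = {(r, s). sim r s}"

primrec subterms :: "'a beh \<Rightarrow> 'a beh set" where
  "subterms Phi = {Phi}"
| "subterms Eps = {Eps}"
| "subterms (Sym x) = {Sym x}"
| "subterms (Plus r s) = insert (Plus r s) (subterms r \<union> subterms s)"
| "subterms (Seq r s) = insert (Seq r s) (subterms r \<union> subterms s)"
| "subterms (Star r) = insert (Star r) (subterms r)"
| "subterms (Fork r) = insert (Fork r) (subterms r)"

definition well_behaved :: "'a beh \<Rightarrow> bool" where
  "well_behaved t \<longleftrightarrow>
     (\<forall>r. Star r \<in> subterms t \<longrightarrow> (\<forall>w. contained (Conc (derivw w r)) Eps))"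

end

theory Submission
  imports Defs
begin

text \<open>
  Close \<open>t\<close> under derivatives and concurrent parts and show, by structural induction, that
  the resulting set has only finitely many similarity classes. For \<open>Plus\<close> and \<open>Fork\<close> the
  closure stays of the same shape as \<open>t\<close>. For \<open>Seq a b\<close> the derivative rule produces
  sums of products \<open>Seq p q\<close> of terms reachable from \<open>a\<close> and \<open>b\<close>; for \<open>Star a\<close>
  well-behavedness makes every \<open>Conc p\<close> similar to \<open>Eps\<close> or \<open>Phi\<close>, so derivatives
  of \<open>Seq p (Star a)\<close> are again sums of terms \<open>Seq p' (Star a)\<close> with \<open>p'\<close> a descendant
  of \<open>a\<close>. By associativity, commutativity and idempotence of \<open>Plus\<close>, a finite sum is
  determined up to similarity by the set of its summands, so sums over a set with finitely
  many classes again fall into finitely many classes.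
\<close>

section \<open>Trace languages\<close>

lemma Lang_mono: "K \<subseteq> K' \<Longrightarrow> Lang r K \<subseteq> Lang r K'"
proof (induction r arbitrary: K K')
  case (Star r)
  then show ?case by (simp, intro lfp_mono, blast)
next
  case (Fork r)
  then show ?case by (fastforce simp: shuffle_lang_def)
next
  case (Plus r s)
  then have "Lang r K \<subseteq> Lang r K'" "Lang s K \<subseteq> Lang s K'" by auto
  then show ?case by auto
qed auto

lemma Lang_Star_unfold: "Lang (Star r) K = Lang r (Lang (Star r) K) \<union> K"
proof -
  have "mono (\<lambda>X. Lang r X \<union> K)"
    by (rule monoI) (use Lang_mono in blast)
  then show ?thesis
    using lfp_unfold by simp
qed

lemma Lang_empty: "Lang r {} = {}"
proof (induction r)
  case (Star r)
  have "lfp (\<lambda>X. Lang r X \<union> {}) \<subseteq> {}"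
    by (rule lfp_lowerbound) (simp add: Star)
  then show ?case by simp
qed (auto simp: shuffle_lang_def)

lemma Lang_nonempty: "Lang r K \<noteq> {} \<Longrightarrow> K' \<noteq> {} \<Longrightarrow> Lang r K' \<noteq> {}"
proof (induction r arbitrary: K K')
  case (Star r)
  then show ?case using Lang_Star_unfold[of r K'] by auto
next
  case (Fork r)
  then show ?case using splice_in_shuffles by (auto simp: shuffle_lang_def) blast
next
  case (Seq r s)
  then show ?case by (metis Lang.simps(5) Lang_empty)
next
  case (Plus r s)
  then show ?case by (metis Lang.simps(4) Un_empty)
qed auto

lemma Lang_length_ge: "u \<in> Lang r K \<Longrightarrow> \<exists>w\<in>K. length w \<le> length u"
proof (induction r arbitrary: K u)
  case (Star r)
  let ?S = "{u :: 'a list. \<exists>w\<in>K. length w \<le> length u}"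
  have "lfp (\<lambda>X. Lang r X \<union> K) \<subseteq> ?S"
  proof (rule lfp_lowerbound, safe)
    fix u assume "u \<in> Lang r ?S"
    from Star.IH[OF this] obtain v where "v \<in> ?S" "length v \<le> length u"
      by (elim bexE)
    then show "\<exists>w\<in>K. length w \<le> length u" using le_trans by blast
  qed auto
  with Star.prems show ?case by auto
next
  case (Fork r)
  then obtain v w where "w \<in> K" "u \<in> shuffles v w" by (auto simp: shuffle_lang_def)
  then show ?case using length_shuffles[of u v w] by (intro bexI[of _ w]) auto
next
  case (Seq r s)
  then obtain v where "v \<in> Lang s K" "length v \<le> length u" by (metis Lang.simps(5))
  then show ?case using Seq.IH(2) le_trans by blast
next
  case (Sym x)
  then show ?case by force
qed auto

section \<open>Similarity\<close>

declare sim_trans [trans]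

lemma sim_Plus: "sim a a' \<Longrightarrow> sim b b' \<Longrightarrow> sim (Plus a b) (Plus a' b')"
  using sim_ctx[of a a' "CPlusL Hole b"] sim_ctx[of b b' "CPlusR a' Hole"] sim_trans by force

lemma sim_Seq: "sim a a' \<Longrightarrow> sim b b' \<Longrightarrow> sim (Seq a b) (Seq a' b')"
  using sim_ctx[of a a' "CSeqL Hole b"] sim_ctx[of b b' "CSeqR a' Hole"] sim_trans by force

lemma sim_Star: "sim a a' \<Longrightarrow> sim (Star a) (Star a')"
  using sim_ctx[of a a' "CStar Hole"] by simp

lemma sim_Fork: "sim a a' \<Longrightarrow> sim (Fork a) (Fork a')"
  using sim_ctx[of a a' "CFork Hole"] by simp

lemma sim_Star_Eps: "sim a Eps \<or> sim a Phi \<Longrightarrow> sim (Star a) Eps"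
  using sim_Star ax_star_eps ax_star_phi sim_trans by blast

lemma sim_Phi_or_Eps_if_Lang_Nil_subset:
  "Lang r {[]} \<subseteq> {[]} \<Longrightarrow> sim r (if Lang r {[]} = {} then Phi else Eps)"
proof (induction r)
  case (Plus a b)
  let ?A = "Lang a {[]}" and ?B = "Lang b {[]}"
  have "sim (Plus a b) (Plus (if ?A = {} then Phi else Eps) (if ?B = {} then Phi else Eps))"
    using Plus by (intro sim_Plus) auto
  also have "sim \<dots> (if ?A \<union> ?B = {} then Phi else Eps)"
    by (cases "?A = {}"; cases "?B = {}") (simp_all add: ax_idem ax_plus_phi_l ax_plus_phi_r)
  finally show ?case by simp
next
  case (Seq a b)
  let ?M = "Lang b {[]}"
  show ?case
  proof (cases "Lang a ?M = {}")
    case True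
    have "sim (Seq a b) Phi"
    proof (cases "?M = {}")
      case True
      then have "sim (Seq a b) (Seq a Phi)" using Seq.IH(2) by (intro sim_Seq sim_refl) auto
      then show ?thesis using ax_seq_phi_r by (rule sim_trans)
    next
      case False
      then have "Lang a {[]} = {}" using \<open>Lang a ?M = {}\<close> Lang_nonempty by blast
      then have "sim (Seq a b) (Seq Phi b)" using Seq.IH(1) by (intro sim_Seq sim_refl) auto
      then show ?thesis using ax_seq_phi_l by (rule sim_trans)
    qed
    with True show ?thesis by simp
  next
    case False
    \<comment> \<open>words are never shortened, so a nonempty word of \<open>?M\<close> would survive into \<open>Lang a ?M\<close>\<close>
    have "?M \<subseteq> {[]}"
    proof
      fix w assume "w \<in> ?M"
      then obtain v where "v \<in> Lang a {w}"
        using False Lang_nonempty[of a ?M "{w}"] by blast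
      moreover have "Lang a {w} \<subseteq> Lang a ?M" using \<open>w \<in> ?M\<close> by (intro Lang_mono) simp
      ultimately show "w \<in> {[]}" using Seq.prems Lang_length_ge[of v a "{w}"] by auto
    qed
    then have M: "?M = {[]}" using False by (metis Lang_empty subset_singletonD)
    then have "sim (Seq a b) (Seq a Eps)" using Seq.IH(2) by (intro sim_Seq sim_refl) auto
    also have "sim \<dots> a" by (rule ax_seq_eps_r)
    also have "sim a (if Lang a {[]} = {} then Phi else Eps)" using Seq M by simp
    finally show ?thesis using M by simp
  qed
next
  case (Star a)
  have "Lang a {[]} \<subseteq> Lang (Star a) {[]}"
    using Lang_mono[of "{[]}" "Lang (Star a) {[]}" a] Lang_Star_unfold[of a "{[]}"] by blast
  then have "sim a (if Lang a {[]} = {} then Phi else Eps)" using Star by blast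
  then have "sim a Eps \<or> sim a Phi" by (simp split: if_splits)
  moreover have "[] \<in> Lang (Star a) {[]}" using Lang_Star_unfold[of a "{[]}"] by blast
  ultimately show ?case by (auto intro: sim_Star_Eps)
next
  case (Fork a)
  have L: "Lang (Fork a) {[]} = Lang a {[]}" by (auto simp: shuffle_lang_def)
  then have "sim (Fork a) (Fork (if Lang a {[]} = {} then Phi else Eps))"
    using Fork by (intro sim_Fork) simp
  also have "sim \<dots> (if Lang a {[]} = {} then Phi else Eps)"
    by (simp add: ax_fork_phi ax_fork_eps)
  finally show ?case using L by simp
qed (auto intro: sim_refl)

lemma sim_Eps_or_Phi_if_contained_Eps: "contained c Eps \<Longrightarrow> sim c Eps \<or> sim c Phi"
  using sim_Phi_or_Eps_if_Lang_Nil_subset[of c]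
  unfolding contained_def by (metis Lang.simps(2))

lemma sim_deriv_Conc_fill:
  assumes "sim s t" and "sim (Conc s) (Conc t)" and "\<And>x. sim (deriv x s) (deriv x t)"
  shows "sim (Conc (fill E s)) (Conc (fill E t)) \<and> (\<forall>x. sim (deriv x (fill E s)) (deriv x (fill E t)))"
proof (induction E)
  case Hole
  then show ?case using assms by simp
next
  case (CStar E)
  then show ?case using sim_ctx[OF assms(1)] by (simp add: sim_Star sim_Seq)
next
  case (CSeqL E r)
  then show ?case by (simp add: sim_Seq sim_Plus sim_refl)
next
  case (CSeqR r E)
  then show ?case using sim_ctx[OF assms(1)] by (simp add: sim_Seq sim_Plus sim_refl)
next
  case (CPlusL E r)
  then show ?case by (simp add: sim_Plus sim_refl)
next
  case (CPlusR r E)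
  then show ?case by (simp add: sim_Plus sim_refl)
next
  case (CFork E)
  then show ?case using sim_ctx[OF assms(1)] by (simp add: sim_Fork)
qed

lemma sim_deriv_Conc: "sim s t \<Longrightarrow> sim (Conc s) (Conc t) \<and> (\<forall>x. sim (deriv x s) (deriv x t))"
proof (induction rule: sim.induct)
  case (sim_trans r s t)
  then show ?case by (meson sim.sim_trans)
next
  case (sim_ctx s t E)
  then show ?case using sim_deriv_Conc_fill by blast
next
  case (ax_seq_eps_l r)
  have "sim (deriv x (Seq Eps r)) (deriv x r)" for x
  proof -
    have "sim (deriv x (Seq Eps r)) (Plus Phi (deriv x r))"
      by (simp add: sim_Plus sim.ax_seq_phi_l sim.ax_seq_eps_l)
    also have "sim \<dots> (deriv x r)" by (rule sim.ax_plus_phi_l)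
    finally show ?thesis .
  qed
  then show ?case by (simp add: sim.ax_seq_eps_l)
next
  case (ax_seq_eps_r r)
  have "sim (deriv x (Seq r Eps)) (deriv x r)" for x
  proof -
    have "sim (deriv x (Seq r Eps)) (Plus (deriv x r) Phi)"
      by (simp add: sim_Plus sim.ax_seq_eps_r sim.ax_seq_phi_r)
    also have "sim \<dots> (deriv x r)" by (rule sim.ax_plus_phi_r)
    finally show ?thesis .
  qed
  then show ?case by (simp add: sim.ax_seq_eps_r)
next
  case (ax_seq_phi_l r)
  have "sim (deriv x (Seq Phi r)) Phi" for x
  proof -
    have "sim (deriv x (Seq Phi r)) (Plus Phi Phi)"
      by (simp add: sim_Plus sim.ax_seq_phi_l)
    also have "sim \<dots> Phi" by (rule sim.ax_plus_phi_r)
    finally show ?thesis .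
  qed
  then show ?case by (simp add: sim.ax_seq_phi_l)
next
  case (ax_seq_phi_r r)
  have "sim (deriv x (Seq r Phi)) Phi" for x
  proof -
    have "sim (deriv x (Seq r Phi)) (Plus Phi Phi)"
      by (simp add: sim_Plus sim.ax_seq_phi_r)
    also have "sim \<dots> Phi" by (rule sim.ax_plus_phi_r)
    finally show ?thesis .
  qed
  then show ?case by (simp add: sim.ax_seq_phi_r)
qed (simp_all add: sim.sim_refl sim.sim_sym sim.ax_assoc sim.ax_comm sim.ax_idem
    sim.ax_plus_phi_r sim.ax_plus_phi_l sim.ax_star_eps sim.ax_fork_eps sim.ax_seq_phi_l
    sim.ax_star_phi sim.ax_fork_phi)

lemma sim_deriv: "sim s t \<Longrightarrow> sim (deriv x s) (deriv x t)"
  using sim_deriv_Conc by blast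

lemma sim_Conc: "sim s t \<Longrightarrow> sim (Conc s) (Conc t)"
  using sim_deriv_Conc by blast

section \<open>Finite sums\<close>

fun plus_list :: "'a beh list \<Rightarrow> 'a beh" where
  "plus_list [] = Phi"
| "plus_list (x # xs) = Plus x (plus_list xs)"

lemma deriv_plus_list: "deriv x (plus_list xs) = plus_list (map (deriv x) xs)"
  by (induction xs) auto

lemma Conc_plus_list: "Conc (plus_list xs) = plus_list (map Conc xs)"
  by (induction xs) auto

lemma sim_plus_list: "list_all2 sim xs ys \<Longrightarrow> sim (plus_list xs) (plus_list ys)"
  by (induction rule: list_all2_induct) (auto intro: sim_refl sim_Plus)

lemma sim_plus_list_append: "sim (plus_list (xs @ ys)) (Plus (plus_list xs) (plus_list ys))"
proof (induction xs)
  case Nil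
  then show ?case by (simp add: sim_sym[OF ax_plus_phi_l])
next
  case (Cons x xs)
  have "sim (plus_list ((x # xs) @ ys)) (Plus x (Plus (plus_list xs) (plus_list ys)))"
    using Cons by (simp add: sim_Plus sim_refl)
  also have "sim \<dots> (Plus (plus_list (x # xs)) (plus_list ys))"
    by (simp add: ax_assoc)
  finally show ?case .
qed

lemma sim_Plus_plus_list_absorb: "x \<in> set ys \<Longrightarrow> sim (Plus x (plus_list ys)) (plus_list ys)"
proof (induction ys)
  case (Cons y ys)
  show ?case
  proof (cases "x = y")
    case True
    have "sim (Plus y (Plus y (plus_list ys))) (Plus (Plus y y) (plus_list ys))" by (rule ax_assoc)
    also have "sim \<dots> (Plus y (plus_list ys))" by (rule sim_Plus[OF ax_idem sim_refl])
    finally show ?thesis using True by simp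
  next
    case False
    have "sim (Plus x (Plus y (plus_list ys))) (Plus (Plus x y) (plus_list ys))" by (rule ax_assoc)
    also have "sim \<dots> (Plus (Plus y x) (plus_list ys))" by (rule sim_Plus[OF ax_comm sim_refl])
    also have "sim \<dots> (Plus y (Plus x (plus_list ys)))" by (rule sim_sym[OF ax_assoc])
    also have "sim \<dots> (Plus y (plus_list ys))" using False Cons by (intro sim_Plus sim_refl) auto
    finally show ?thesis by simp
  qed
qed simp

lemma sim_Plus_plus_list_subset:
  "set xs \<subseteq> set ys \<Longrightarrow> sim (Plus (plus_list xs) (plus_list ys)) (plus_list ys)"
proof (induction xs)
  case Nil
  then show ?case by (simp add: ax_plus_phi_l)
next
  case (Cons x xs)
  have "sim (Plus (plus_list (x # xs)) (plus_list ys)) (Plus x (Plus (plus_list xs) (plus_list ys)))"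
    by (simp add: sim_sym[OF ax_assoc])
  also have "sim \<dots> (Plus x (plus_list ys))" using Cons by (intro sim_Plus sim_refl) auto
  also have "sim \<dots> (plus_list ys)" using Cons.prems by (intro sim_Plus_plus_list_absorb) auto
  finally show ?case .
qed

lemma sim_plus_list_set_eq: "set xs = set ys \<Longrightarrow> sim (plus_list xs) (plus_list ys)"
proof -
  assume eq: "set xs = set ys"
  have "sim (plus_list xs) (Plus (plus_list ys) (plus_list xs))"
    using eq sim_Plus_plus_list_subset[of ys xs] by (simp add: sim_sym)
  also have "sim \<dots> (Plus (plus_list xs) (plus_list ys))" by (rule ax_comm)
  also have "sim \<dots> (plus_list ys)" using eq by (simp add: sim_Plus_plus_list_subset)
  finally show ?thesis .
qed

definition sums_over :: "'a beh set \<Rightarrow> 'a beh set" where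
  "sums_over L = {q. \<exists>zs. set zs \<subseteq> L \<and> sim q (plus_list zs)}"

lemma sums_over_base: "y \<in> L \<Longrightarrow> y \<in> sums_over L"
  unfolding sums_over_def by (intro CollectI exI[of _ "[y]"]) (simp add: sim_sym[OF ax_plus_phi_r])

lemma sums_over_sim: "sim q q' \<Longrightarrow> q' \<in> sums_over L \<Longrightarrow> q \<in> sums_over L"
  unfolding sums_over_def using sim_trans by blast

lemma sums_over_Phi: "sim q Phi \<Longrightarrow> q \<in> sums_over L"
  unfolding sums_over_def by (intro CollectI exI[of _ "[]"]) simp

lemma sums_over_Plus: "p \<in> sums_over L \<Longrightarrow> q \<in> sums_over L \<Longrightarrow> Plus p q \<in> sums_over L"
proof -
  assume "p \<in> sums_over L" "q \<in> sums_over L"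
  then obtain xs ys where "set xs \<subseteq> L" "set ys \<subseteq> L" "sim p (plus_list xs)" "sim q (plus_list ys)"
    by (auto simp: sums_over_def)
  moreover from this have "sim (Plus p q) (plus_list (xs @ ys))"
    using sim_Plus sim_sym[OF sim_plus_list_append] sim_trans by blast
  ultimately show ?thesis unfolding sums_over_def
    by (intro CollectI exI[of _ "xs @ ys"]) auto
qed

lemma plus_list_in_sums_over: "set xs \<subseteq> sums_over L \<Longrightarrow> plus_list xs \<in> sums_over L"
  by (induction xs) (auto intro: sums_over_Plus sums_over_Phi sim_refl)

lemma sums_over_closed:
  assumes "q \<in> sums_over L"
    and "\<And>s t. sim s t \<Longrightarrow> sim (g s) (g t)"
    and "\<And>zs. g (plus_list zs) = plus_list (map g zs)"
    and "\<And>y. y \<in> L \<Longrightarrow> g y \<in> sums_over L"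
  shows "g q \<in> sums_over L"
proof -
  obtain xs where xs: "set xs \<subseteq> L" "sim q (plus_list xs)"
    using assms(1) by (auto simp: sums_over_def)
  have "sim (g q) (plus_list (map g xs))"
    using assms(2)[OF xs(2)] assms(3) by simp
  moreover have "plus_list (map g xs) \<in> sums_over L"
    using xs(1) assms(4) by (intro plus_list_in_sums_over) auto
  ultimately show ?thesis by (rule sums_over_sim)
qed

definition finite_mod_sim :: "'a beh set \<Rightarrow> bool" where
  "finite_mod_sim A \<longleftrightarrow> (\<exists>F. finite F \<and> (\<forall>a\<in>A. \<exists>f\<in>F. sim a f))"

lemma finite_mod_sim_subset: "A \<subseteq> B \<Longrightarrow> finite_mod_sim B \<Longrightarrow> finite_mod_sim A"
  unfolding finite_mod_sim_def by blast

lemma finite_imp_finite_mod_sim: "finite A \<Longrightarrow> finite_mod_sim A"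
  unfolding finite_mod_sim_def by (auto intro: sim_refl)

lemma finite_mod_sim_Un: "finite_mod_sim A \<Longrightarrow> finite_mod_sim B \<Longrightarrow> finite_mod_sim (A \<union> B)"
  unfolding finite_mod_sim_def by (metis Un_iff finite_UnI)

lemma finite_mod_sim_image:
  assumes "finite_mod_sim A" and "\<And>p p'. sim p p' \<Longrightarrow> sim (f p) (f p')"
  shows "finite_mod_sim (f ` A)"
proof -
  obtain F where "finite F" "\<forall>a\<in>A. \<exists>u\<in>F. sim a u"
    using assms(1) by (auto simp: finite_mod_sim_def)
  then show ?thesis
    unfolding finite_mod_sim_def using assms(2) by (intro exI[of _ "f ` F"]) blast
qed

lemma finite_mod_sim_image2:
  assumes "finite_mod_sim A" and "finite_mod_sim B"
    and "\<And>p p' q q'. sim p p' \<Longrightarrow> sim q q' \<Longrightarrow> sim (f p q) (f p' q')"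
  shows "finite_mod_sim {f p q | p q. p \<in> A \<and> q \<in> B}"
proof -
  obtain F G where "finite F" "\<forall>a\<in>A. \<exists>u\<in>F. sim a u" "finite G" "\<forall>b\<in>B. \<exists>v\<in>G. sim b v"
    using assms(1,2) by (auto simp: finite_mod_sim_def)
  then show ?thesis
    unfolding finite_mod_sim_def using assms(3)
    by (intro exI[of _ "case_prod f ` (F \<times> G)"]) fastforce
qed

lemma finite_mod_sim_sums_over:
  assumes "finite_mod_sim L"
  shows "finite_mod_sim (sums_over L)"
proof -
  obtain F where "finite F" and F: "\<forall>a\<in>L. \<exists>f\<in>F. sim a f"
    using assms by (auto simp: finite_mod_sim_def)
  let ?rep = "\<lambda>z. SOME f. f \<in> F \<and> sim z f"
  have "\<exists>g \<in> plus_list ` {ys. set ys \<subseteq> F \<and> distinct ys}. sim q g" if q: "q \<in> sums_over L" for q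
  proof -
    obtain zs where zs: "set zs \<subseteq> L" "sim q (plus_list zs)"
      using q by (auto simp: sums_over_def)
    then have rep: "?rep z \<in> F \<and> sim z (?rep z)" if "z \<in> set zs" for z
      using F that by (metis (mono_tags, lifting) someI_ex subsetD)
    let ?ys = "remdups (map ?rep zs)"
    have "sim q (plus_list (map ?rep zs))"
      using zs(2) rep by (metis (no_types, lifting) list_all2_map2 list_all2_same sim_plus_list sim_trans)
    also have "sim \<dots> (plus_list ?ys)" by (simp add: sim_plus_list_set_eq)
    finally have "sim q (plus_list ?ys)" .
    moreover have "set ?ys \<subseteq> F" using rep by auto
    ultimately show ?thesis by (intro bexI[of _ "plus_list ?ys"]) auto
  qed
  then show ?thesis
    unfolding finite_mod_sim_def using finite_subset_distinct[OF \<open>finite F\<close>] by blast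
qed

lemma finite_quotient_if_finite_mod_sim:
  assumes "finite_mod_sim A"
  shows "finite (A // sim_rel)"
proof -
  obtain F where "finite F" and F: "\<forall>a\<in>A. \<exists>f\<in>F. sim a f"
    using assms by (auto simp: finite_mod_sim_def)
  have "sim_rel `` {a} = sim_rel `` {f}" if "sim a f" for a f
    using that by (auto simp: sim_rel_def) (meson sim_sym sim_trans)+
  then have "A // sim_rel \<subseteq> (\<lambda>f. sim_rel `` {f}) ` F"
    using F unfolding quotient_def by blast
  then show ?thesis using \<open>finite F\<close> finite_subset by blast
qed

section \<open>Behaviors reachable by derivatives and concurrent parts\<close>

inductive_set reachable :: "'a beh \<Rightarrow> 'a beh set" for r where
  reachable_base: "r \<in> reachable r"
| reachable_deriv: "q \<in> reachable r \<Longrightarrow> deriv x q \<in> reachable r"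
| reachable_Conc: "q \<in> reachable r \<Longrightarrow> Conc q \<in> reachable r"

lemma reachable_subsetI:
  assumes "r \<in> S" and "\<And>q x. q \<in> S \<Longrightarrow> deriv x q \<in> S" and "\<And>q. q \<in> S \<Longrightarrow> Conc q \<in> S"
  shows "reachable r \<subseteq> S"
  using assms by (auto elim: reachable.induct)

lemma reachable_subset_sums_over:
  assumes "r \<in> L"
    and "\<And>y x. y \<in> L \<Longrightarrow> deriv x y \<in> sums_over L"
    and "\<And>y. y \<in> L \<Longrightarrow> Conc y \<in> sums_over L"
  shows "reachable r \<subseteq> sums_over L"
proof (rule reachable_subsetI)
  show "r \<in> sums_over L" using assms(1) by (rule sums_over_base)
  show "deriv x q \<in> sums_over L" if "q \<in> sums_over L" for q x
    using that sim_deriv deriv_plus_list assms(2) by (rule sums_over_closed)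
  show "Conc q \<in> sums_over L" if "q \<in> sums_over L" for q
    using that sim_Conc Conc_plus_list assms(3) by (rule sums_over_closed)
qed

lemma descendants_subset_reachable: "descendants r \<subseteq> reachable r"
proof -
  have "derivw w q \<in> reachable r" if "q \<in> reachable r" for w q
    using that by (induction w arbitrary: q) (simp_all add: reachable_deriv)
  then show ?thesis unfolding descendants_def using reachable_base by blast
qed

lemma self_in_descendants: "a \<in> descendants a"
  unfolding descendants_def by (auto intro: exI[of _ "[]"])

lemma derivw_snoc: "derivw (w @ [x]) r = deriv x (derivw w r)"
  by (induction w arbitrary: r) auto

lemma deriv_in_descendants: "p \<in> descendants a \<Longrightarrow> deriv x p \<in> descendants a"
  unfolding descendants_def by (auto simp flip: derivw_snoc)

lemma finite_mod_sim_reachable_Plus: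
  assumes "finite_mod_sim (reachable a)" and "finite_mod_sim (reachable b)"
  shows "finite_mod_sim (reachable (Plus a b))"
proof (rule finite_mod_sim_subset)
  show "reachable (Plus a b) \<subseteq> {Plus p q | p q. p \<in> reachable a \<and> q \<in> reachable b}"
    by (rule reachable_subsetI) (auto intro: reachable_base reachable_deriv reachable_Conc)
  show "finite_mod_sim {Plus p q | p q. p \<in> reachable a \<and> q \<in> reachable b}"
    using assms by (rule finite_mod_sim_image2) (rule sim_Plus)
qed

lemma finite_mod_sim_reachable_Fork:
  assumes "finite_mod_sim (reachable a)"
  shows "finite_mod_sim (reachable (Fork a))"
proof (rule finite_mod_sim_subset)
  show "reachable (Fork a) \<subseteq> Fork ` reachable a"
    by (rule reachable_subsetI) (auto intro: reachable_base reachable_deriv)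
  show "finite_mod_sim (Fork ` reachable a)"
    using assms by (rule finite_mod_sim_image) (rule sim_Fork)
qed

lemma finite_mod_sim_reachable_Seq:
  assumes "finite_mod_sim (reachable a)" and "finite_mod_sim (reachable b)"
  shows "finite_mod_sim (reachable (Seq a b))"
proof -
  let ?L = "{Seq p q | p q. p \<in> reachable a \<and> q \<in> reachable b}"
  have "reachable (Seq a b) \<subseteq> sums_over ?L"
  proof (rule reachable_subset_sums_over)
    fix y x assume "y \<in> ?L"
    then obtain p q where y: "y = Seq p q" "p \<in> reachable a" "q \<in> reachable b" by blast
    then have "Seq (deriv x p) q \<in> sums_over ?L" "Seq (Conc p) (deriv x q) \<in> sums_over ?L"
      by (blast intro: sums_over_base reachable.intros)+
    then show "deriv x y \<in> sums_over ?L"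
      using y(1) by (simp add: sums_over_Plus)
  next
    fix y assume "y \<in> ?L"
    then show "Conc y \<in> sums_over ?L"
      by (auto intro!: sums_over_base reachable_Conc)
  qed (blast intro: reachable_base)
  moreover have "finite_mod_sim ?L"
    using assms by (rule finite_mod_sim_image2) (rule sim_Seq)
  ultimately show ?thesis
    by (rule finite_mod_sim_subset[OF _ finite_mod_sim_sums_over])
qed

lemma finite_mod_sim_reachable_Star:
  assumes "finite_mod_sim (reachable a)"
    and Conc_desc: "\<And>p. p \<in> descendants a \<Longrightarrow> sim (Conc p) Eps \<or> sim (Conc p) Phi"
  shows "finite_mod_sim (reachable (Star a))"
proof -
  let ?S = "Star a"
  let ?L = "{?S, Eps} \<union> (\<lambda>p. Seq p ?S) ` descendants a"
  have Eps_or_Phi: "q \<in> sums_over ?L" if "sim q Eps \<or> sim q Phi" for q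
    using that by (auto intro: sums_over_Phi sums_over_sim sums_over_base)
  have Seq_in: "Seq p ?S \<in> sums_over ?L" if "p \<in> descendants a" for p
    using that by (intro sums_over_base) blast
  have deriv_a_in: "Seq (deriv x a) ?S \<in> sums_over ?L" for x
    by (rule Seq_in[OF deriv_in_descendants[OF self_in_descendants]])
  have "reachable ?S \<subseteq> sums_over ?L"
  proof (rule reachable_subset_sums_over)
    fix y x assume "y \<in> ?L"
    then consider "y = ?S" | "y = Eps" | p where "y = Seq p ?S" "p \<in> descendants a"
      by blast
    then show "deriv x y \<in> sums_over ?L"
    proof cases
      case 1
      then show ?thesis using deriv_a_in by simp
    next
      case 2
      then show ?thesis by (simp add: sums_over_Phi sim_refl)
    next
      case 3
      let ?T = "Seq (deriv x a) ?S"
      from deriv_a_in have "Seq (Conc p) ?T \<in> sums_over ?L"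
        using Conc_desc[OF 3(2)] sim_Seq[OF _ sim_refl, of "Conc p" _ ?T]
        by (meson ax_seq_eps_l ax_seq_phi_l sim_trans sums_over_Phi sums_over_sim)
      moreover have "Seq (deriv x p) ?S \<in> sums_over ?L"
        using 3(2) by (intro Seq_in deriv_in_descendants)
      ultimately show ?thesis using 3(1) by (simp add: sums_over_Plus)
    qed
  next
    fix y assume "y \<in> ?L"
    then consider "y = ?S" | "y = Eps" | p where "y = Seq p ?S" "p \<in> descendants a"
      by blast
    then show "Conc y \<in> sums_over ?L"
    proof cases
      case 1
      then show ?thesis
        using sim_Star_Eps[OF Conc_desc[OF self_in_descendants]] Eps_or_Phi by simp
    next
      case 2
      then show ?thesis by (simp add: sums_over_base)
    next
      case 3
      have "sim (Conc y) (Seq (Conc p) Eps)"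
        using 3(1) Conc_desc[OF self_in_descendants]
        by (simp add: sim_Seq sim_refl sim_Star_Eps)
      also have "sim \<dots> (Conc p)" by (rule ax_seq_eps_r)
      finally show ?thesis
        using Conc_desc[OF 3(2)] Eps_or_Phi sums_over_sim by blast
    qed
  qed simp
  moreover have "finite_mod_sim ?L"
  proof (rule finite_mod_sim_Un)
    have "finite_mod_sim (descendants a)"
      using assms(1) descendants_subset_reachable by (rule finite_mod_sim_subset[rotated])
    then show "finite_mod_sim ((\<lambda>p. Seq p ?S) ` descendants a)"
      by (rule finite_mod_sim_image) (simp add: sim_Seq sim_refl)
  qed (simp add: finite_imp_finite_mod_sim)
  ultimately show ?thesis
    by (rule finite_mod_sim_subset[OF _ finite_mod_sim_sums_over])
qed

lemma finite_mod_sim_reachable_atom: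
  assumes "r \<in> {Phi, Eps, Sym y}"
  shows "finite_mod_sim (reachable r)"
proof (rule finite_mod_sim_subset)
  show "reachable r \<subseteq> {Phi, Eps, Sym y}"
    using assms by (intro reachable_subsetI) (auto split: if_splits)
qed (simp add: finite_imp_finite_mod_sim)

lemma well_behaved_simps [simp]:
  "well_behaved Phi" "well_behaved Eps" "well_behaved (Sym y)"
  "well_behaved (Plus a b) \<longleftrightarrow> well_behaved a \<and> well_behaved b"
  "well_behaved (Seq a b) \<longleftrightarrow> well_behaved a \<and> well_behaved b"
  "well_behaved (Fork a) \<longleftrightarrow> well_behaved a"
  "well_behaved (Star a) \<longleftrightarrow> well_behaved a \<and> (\<forall>w. contained (Conc (derivw w a)) Eps)"
  unfolding well_behaved_def by auto

lemma finite_mod_sim_reachable: "well_behaved r \<Longrightarrow> finite_mod_sim (reachable r)"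
proof (induction r)
  case (Star a)
  have "sim (Conc p) Eps \<or> sim (Conc p) Phi" if "p \<in> descendants a" for p
    using that Star.prems sim_Eps_or_Phi_if_contained_Eps by (auto simp: descendants_def)
  with Star show ?case by (intro finite_mod_sim_reachable_Star) auto
qed (auto intro: finite_mod_sim_reachable_atom finite_mod_sim_reachable_Plus
    finite_mod_sim_reachable_Seq finite_mod_sim_reachable_Fork)

theorem theorem6:
  fixes t :: "'a::finite beh"
  assumes "well_behaved t"
  shows "finite (descendants t // sim_rel)"
proof (rule finite_quotient_if_finite_mod_sim)
  show "finite_mod_sim (descendants t)"
    using descendants_subset_reachable finite_mod_sim_reachable[OF assms]
    by (rule finite_mod_sim_subset)
qed

end
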